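(* Let $1\le K<d$ be integers. For $\lambda\in(0,1)$ let $\bar F_\lambda$ be the solution of $\bar F'(w)=T_\lambda(\bar F(w))-\bar F(w)$, $\bar F(0)=\lambda$, with $T_\lambda$ as below, and let $\mathbb E[W_\lambda]=\frac1\lambda\int_0^\infty T_\lambda(\bar F_\lambda(w))\,dw$. Then $$\lim_{\lambda\to1^-}-\frac{\mathbb E[W_\lambda]}{\log(1-\lambda)}=\frac{K}{d-K}.$$
   Context: For integers $1\le K<d$ and $\lambda\in(0,1)$, $T_\lambda(u)=\frac{\lambda}{K}\sum_{j=0}^{K-1}(K-j)\binom{d}{j}u^{d-j}(1-u)^j$ for $u\in[0,\infty)$ (the LL($d,K$) policy: batches of $K$ exponential(1) jobs sent to the $K$ least loaded of $d$ sampled servers). *)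

theory Defs
  imports "HOL-Analysis.Analysis"
begin

definition T_LL :: "nat \<Rightarrow> nat \<Rightarrow> real \<Rightarrow> real \<Rightarrow> real" where
  "T_LL d K lam u = lam / real K *
     (\<Sum>j<K. real (K - j) * real (d choose j) * u ^ (d - j) * (1 - u) ^ j)"

definition mean_wait :: "nat \<Rightarrow> nat \<Rightarrow> real \<Rightarrow> (real \<Rightarrow> real) \<Rightarrow> real" where
  "mean_wait d K lam F = (1 / lam) * integral {0..} (\<lambda>w. T_LL d K lam (F w))"

end

theory Submission
  imports Defs "HOL-Real_Asymp.Real_Asymp"
begin

text \<open>Writing \<open>T(u) = \<lambda> (1 - E[min(J, K)] / K)\<close> with \<open>J ~ Bin(d, 1 - u)\<close> shows that near
  \<open>u = 1\<close> the solution \<open>f\<close> of \<open>f' = T(f) - f\<close> decreases at rate about \<open>(1 - \<lambda>) + c (1 - f)\<close>,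
  \<open>c = d/K - 1\<close>, while \<open>T(f) \<approx> \<lambda>\<close>. By the chain rule, \<open>\<integral> T(f) = P(\<lambda>) - P(lim f)\<close> for
  any \<open>P\<close> with \<open>P'(u) (u - T(u)) = T(u)\<close>; comparing with \<open>P(u) = -\<lambda> ln((1 - \<lambda>) + c (1 - u)) / c\<close>
  gives \<open>\<integral> T(f) \<approx> \<lambda> (-ln(1 - \<lambda>)) / c\<close>, so the ratio tends to \<open>1/c = K/(d - K)\<close>.
  The lower bound only integrates while \<open>f \<ge> 1 - \<delta>\<close>; the upper bound replaces \<open>c\<close> by
  \<open>d (1 - \<delta>)\<^sup>d / K - 1\<close> and pays \<open>\<lambda> / \<delta>\<^sup>d\<^sup>-\<^sup>1\<close> for the time spent below \<open>1 - \<delta>\<close>.\<close>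

lemma binomial_ring_first_moment:
  fixes x y :: "'a::comm_semiring_1"
  shows "(\<Sum>j\<le>n. of_nat j * (of_nat (n choose j) * x ^ j * y ^ (n - j)))
       = of_nat n * x * (x + y) ^ (n - 1)"
proof (cases n)
  case 0
  then show ?thesis by simp
next
  case (Suc m)
  have absorb: "of_nat (Suc k) * of_nat (Suc m choose Suc k) = (of_nat (Suc m) * of_nat (m choose k) :: 'a)"
    for k by (metis of_nat_mult Suc_times_binomial)
  have "(\<Sum>j\<le>n. of_nat j * (of_nat (n choose j) * x ^ j * y ^ (n - j)))
      = (\<Sum>k\<le>m. of_nat (Suc k) * (of_nat (Suc m choose Suc k) * x ^ Suc k * y ^ (Suc m - Suc k)))"
    unfolding Suc by (subst sum.atMost_Suc_shift) simp
  also have "\<dots> = (\<Sum>k\<le>m. of_nat (Suc m) * x * (of_nat (m choose k) * x ^ k * y ^ (m - k)))"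
  proof (intro sum.cong refl)
    fix k
    have "of_nat (Suc k) * (of_nat (Suc m choose Suc k) * x ^ Suc k * y ^ (Suc m - Suc k))
        = (of_nat (Suc k) * of_nat (Suc m choose Suc k)) * (x * (x ^ k * y ^ (m - k)))"
      by (simp only: power_Suc diff_Suc_Suc mult_ac)
    also have "\<dots> = of_nat (Suc m) * x * (of_nat (m choose k) * x ^ k * y ^ (m - k))"
      by (simp only: absorb mult_ac)
    finally show "of_nat (Suc k) * (of_nat (Suc m choose Suc k) * x ^ Suc k * y ^ (Suc m - Suc k))
        = of_nat (Suc m) * x * (of_nat (m choose k) * x ^ k * y ^ (m - k))" .
  qed
  also have "\<dots> = of_nat n * x * (x + y) ^ (n - 1)"
    by (simp add: Suc sum_distrib_left[symmetric] binomial_ring add.commute)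
  finally show ?thesis .
qed

definition LL_load :: "nat \<Rightarrow> nat \<Rightarrow> real \<Rightarrow> real" where
  "LL_load d K u = (\<Sum>j\<le>d. real (min j K) * (real (d choose j) * (1 - u) ^ j * u ^ (d - j)))"

lemma T_LL_eq_load:
  assumes "K \<le> d"
  shows "T_LL d K lam u = lam / real K * (real K - LL_load d K u)"
proof -
  define p where "p j = real (d choose j) * (1 - u) ^ j * u ^ (d - j)" for j
  have total: "(\<Sum>j\<le>d. p j) = 1"
    unfolding p_def using binomial_ring[of "1 - u" u d] by (simp add: add.commute)
  have "real K - LL_load d K u = (\<Sum>j\<le>d. (real K - real (min j K)) * p j)"
    unfolding LL_load_def p_def[symmetric] left_diff_distrib sum_subtractf
    by (simp add: sum_distrib_left[symmetric] total)
  also have "\<dots> = (\<Sum>j<K. real (K - j) * p j)"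
    using assms by (intro sum.mono_neutral_cong_right) (auto simp: min_def of_nat_diff)
  finally show ?thesis
    unfolding T_LL_def p_def by (simp add: mult_ac)
qed

lemma LL_load_le:
  assumes "0 \<le> u" "u \<le> 1"
  shows "LL_load d K u \<le> real d * (1 - u)"
proof -
  have "LL_load d K u \<le> (\<Sum>j\<le>d. real j * (real (d choose j) * (1 - u) ^ j * u ^ (d - j)))"
    unfolding LL_load_def using assms by (intro sum_mono mult_right_mono) auto
  also have "\<dots> = real d * (1 - u)"
    using binomial_ring_first_moment[of d "1 - u" u] by simp
  finally show ?thesis .
qed

lemma LL_load_ge_first_term:
  assumes "1 \<le> K" "1 \<le> d" "0 \<le> u" "u \<le> 1"
  shows "real d * (1 - u) * u ^ (d - 1) \<le> LL_load d K u"
proof -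
  have "real (min 1 K) * (real (d choose 1) * (1 - u) ^ 1 * u ^ (d - 1)) \<le> LL_load d K u"
    unfolding LL_load_def using assms by (intro member_le_sum) auto
  then show ?thesis using assms by simp
qed

text \<open>Pointwise \<open>min j K \<ge> (K/d) j\<close>, with an extra \<open>K/d\<close> to spare at \<open>j = d - 1\<close>.\<close>
lemma LL_load_ge:
  assumes "K < d" "0 \<le> u" "u \<le> 1"
  shows "real K * (1 - u) + real K * u * (1 - u) ^ (d - 1) \<le> LL_load d K u"
proof -
  define p where "p j = real (d choose j) * (1 - u) ^ j * u ^ (d - j)" for j
  have p_nonneg: "0 \<le> p j" for j unfolding p_def using assms by simp
  have coeff: "real K / real d * real j + (if j = d - 1 then real K / real d else 0) \<le> real (min j K)"
    if "j \<le> d" for j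
  proof (cases "j = d - 1")
    case True
    with assms have "real K / real d * real j + real K / real d = real K" "min j K = K"
      by (auto simp: field_simps of_nat_diff)
    with True show ?thesis by simp
  next
    case False
    have "real K / real d * real j \<le> real j" "real K / real d * real j \<le> real K"
      using assms that by (auto simp: field_simps mult_right_mono mult_left_mono)
    with False show ?thesis by (simp add: min_def)
  qed
  have mean: "(\<Sum>j\<le>d. real j * p j) = real d * (1 - u)"
    unfolding p_def using binomial_ring_first_moment[of d "1 - u" u] by simp
  have p_last: "p (d - 1) = real d * (1 - u) ^ (d - 1) * u"
    using assms unfolding p_def by (simp add: binomial_symmetric[symmetric] Suc_diff_Suc)
  have "real K * (1 - u) + real K * u * (1 - u) ^ (d - 1)
      = real K / real d * (\<Sum>j\<le>d. real j * p j) + real K / real d * p (d - 1)"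
    unfolding mean p_last using assms by (simp add: field_simps)
  also have "\<dots> = (\<Sum>j\<le>d. real K / real d * real j * p j
                      + (if j = d - 1 then real K / real d * p j else 0))"
    by (simp add: sum.distrib sum_distrib_left mult.assoc)
  also have "\<dots> \<le> LL_load d K u"
    unfolding LL_load_def p_def[symmetric]
  proof (intro sum_mono)
    fix j assume "j \<in> {..d}"
    then have "(real K / real d * real j + (if j = d - 1 then real K / real d else 0)) * p j
        \<le> real (min j K) * p j"
      by (intro mult_right_mono coeff p_nonneg) auto
    then show "real K / real d * real j * p j + (if j = d - 1 then real K / real d * p j else 0)
        \<le> real (min j K) * p j"
      by (cases "j = d - 1") (simp_all add: distrib_right)
  qed
  finally show ?thesis .
qed

lemma T_LL_nonneg:
  assumes "0 \<le> lam" "0 \<le> u" "u \<le> 1"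
  shows "0 \<le> T_LL d K lam u"
  unfolding T_LL_def using assms by (intro mult_nonneg_nonneg sum_nonneg) auto

locale LL_params =
  fixes d K :: nat
  assumes K_pos: "1 \<le> K" and K_less: "K < d"
begin

lemma T_LL_ge:
  assumes "0 \<le> lam" "0 \<le> u" "u \<le> 1"
  shows "lam * (1 - real d * (1 - u) / real K) \<le> T_LL d K lam u"
proof -
  have "lam / real K * (real K - real d * (1 - u)) \<le> lam / real K * (real K - LL_load d K u)"
    using assms LL_load_le[of u d K] by (intro mult_left_mono) auto
  then show ?thesis
    using K_pos K_less by (simp add: T_LL_eq_load field_simps)
qed

lemma T_LL_le_first_term:
  assumes "0 \<le> lam" "0 \<le> u" "u \<le> 1"
  shows "T_LL d K lam u \<le> lam * (1 - real d * (1 - u) * u ^ (d - 1) / real K)"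
proof -
  have "lam / real K * (real K - LL_load d K u) \<le> lam / real K * (real K - real d * (1 - u) * u ^ (d - 1))"
    using assms K_pos K_less LL_load_ge_first_term[of K d u] by (intro mult_left_mono) auto
  then show ?thesis
    using K_pos K_less by (simp add: T_LL_eq_load field_simps)
qed

lemma T_LL_le:
  assumes "0 \<le> lam" "0 \<le> u" "u \<le> 1"
  shows "T_LL d K lam u \<le> lam * u * (1 - (1 - u) ^ (d - 1))"
proof -
  have "real K - LL_load d K u \<le> real K * (u * (1 - (1 - u) ^ (d - 1)))"
    using LL_load_ge[of K d u] assms K_less by (simp add: algebra_simps)
  then have "lam / real K * (real K - LL_load d K u)
      \<le> lam / real K * (real K * (u * (1 - (1 - u) ^ (d - 1))))"
    using assms by (intro mult_left_mono) auto
  then show ?thesis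
    using K_pos K_less by (simp add: T_LL_eq_load)
qed

lemma T_LL_le_mult:
  assumes "0 \<le> lam" "0 \<le> u" "u \<le> 1"
  shows "T_LL d K lam u \<le> lam * u"
proof -
  have "lam * u * (1 - (1 - u) ^ (d - 1)) \<le> lam * u"
    using assms by (simp add: mult_left_le)
  with T_LL_le[OF assms] show ?thesis by linarith
qed

text \<open>\<open>u - T(u)\<close> is the speed at which a solution of \<open>f' = T(f) - f\<close> decreases at level \<open>u\<close>.\<close>
lemma drift_ge_of_far:
  assumes "0 \<le> lam" "lam \<le> 1" "0 \<le> u" "0 \<le> \<delta>" "\<delta> \<le> 1 - u"
  shows "lam * u * \<delta> ^ (d - 1) \<le> u - T_LL d K lam u"
proof -
  have "lam * u * \<delta> ^ (d - 1) \<le> lam * u * (1 - u) ^ (d - 1)"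
    using assms by (intro mult_left_mono power_mono) auto
  moreover have "lam * u \<le> u"
    using assms by (simp add: mult_left_le_one_le)
  moreover have "T_LL d K lam u \<le> lam * u * (1 - (1 - u) ^ (d - 1))"
    using assms by (intro T_LL_le) auto
  ultimately show ?thesis by (simp add: algebra_simps)
qed

lemma drift_ge_near_one:
  assumes "\<delta> \<le> 1" "1 - \<delta> \<le> lam" "1 - \<delta> \<le> u" "u \<le> 1"
  shows "(1 - lam) + (real d * (1 - \<delta>) ^ d / real K - 1) * (1 - u) \<le> u - T_LL d K lam u"
proof -
  have "(1 - \<delta>) ^ d = (1 - \<delta>) * (1 - \<delta>) ^ (d - 1)"
    using K_less by (simp add: power_eq_if)
  also have "\<dots> \<le> lam * u ^ (d - 1)"
    using assms by (intro mult_mono power_mono) auto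
  finally have "real d * (1 - \<delta>) ^ d / real K \<le> real d * (lam * u ^ (d - 1)) / real K"
    using K_pos by (intro divide_right_mono mult_left_mono) auto
  then have "(real d * (1 - \<delta>) ^ d / real K - 1) * (1 - u)
      \<le> (lam * real d * u ^ (d - 1) / real K - 1) * (1 - u)"
    using assms by (intro mult_right_mono) (auto simp: mult_ac)
  moreover have "T_LL d K lam u \<le> lam * (1 - real d * (1 - u) * u ^ (d - 1) / real K)"
    using assms by (intro T_LL_le_first_term) auto
  ultimately show ?thesis by (simp add: algebra_simps)
qed

lemma drift_le:
  assumes "0 \<le> lam" "lam \<le> 1" "0 \<le> u" "u \<le> 1"
  shows "u - T_LL d K lam u \<le> (1 - lam) + (real d / real K - 1) * (1 - u)"
proof -
  have "lam * (real d * (1 - u) / real K) \<le> real d * (1 - u) / real K"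
    using assms by (intro mult_left_le_one_le) auto
  with T_LL_ge[OF assms(1,3,4)] show ?thesis by (simp add: algebra_simps)
qed

text \<open>Along a solution the right-hand side is \<open>-(P \<circ> f)'\<close> for
  \<open>P(u) = u / \<delta>\<^sup>d\<^sup>-\<^sup>1 - ln((1 - \<lambda>) + c (1 - u)) / c\<close>; the first summand covers \<open>u \<le> 1 - \<delta>\<close>,
  the second \<open>u\<close> close to 1.\<close>
lemma T_LL_le_weighted_drift:
  assumes lam: "0 < lam" "lam < 1" and u: "0 \<le> u" "u \<le> 1"
    and \<delta>: "0 < \<delta>" "\<delta> \<le> 1" "1 - \<delta> \<le> lam"
    and c: "c = real d * (1 - \<delta>) ^ d / real K - 1" "0 \<le> c"
  shows "T_LL d K lam u \<le> (1 / \<delta> ^ (d - 1) + 1 / ((1 - lam) + c * (1 - u))) * (u - T_LL d K lam u)"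
proof -
  define q where "q = (1 - lam) + c * (1 - u)"
  have q_pos: "0 < q"
    unfolding q_def using lam u c by (simp add: add_pos_nonneg)
  have T_le: "T_LL d K lam u \<le> lam * u"
    using lam u by (intro T_LL_le_mult) auto
  moreover have lam_u: "lam * u \<le> u"
    using lam u by (intro mult_left_le_one_le) auto
  ultimately have drift_nonneg: "0 \<le> u - T_LL d K lam u" by linarith
  show ?thesis
  proof (cases "\<delta> \<le> 1 - u")
    case True
    then have "lam * u * \<delta> ^ (d - 1) \<le> u - T_LL d K lam u"
      using lam u \<delta> by (intro drift_ge_of_far) auto
    with T_le have "T_LL d K lam u \<le> (u - T_LL d K lam u) / \<delta> ^ (d - 1)"
      using \<delta> by (simp add: pos_le_divide_eq mult_right_mono order_trans)
    moreover have "0 \<le> (u - T_LL d K lam u) / q"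
      using drift_nonneg q_pos by simp
    ultimately show ?thesis
      unfolding q_def[symmetric] by (simp add: distrib_right)
  next
    case False
    then have "q \<le> u - T_LL d K lam u"
      unfolding q_def c(1) using \<delta> u by (intro drift_ge_near_one) auto
    moreover have "T_LL d K lam u \<le> 1"
      using T_le lam_u u by linarith
    ultimately have "T_LL d K lam u \<le> (u - T_LL d K lam u) / q"
      using q_pos by (simp add: le_divide_eq_1_pos order_trans)
    moreover have "0 \<le> (u - T_LL d K lam u) / \<delta> ^ (d - 1)"
      using drift_nonneg \<delta> by simp
    ultimately show ?thesis
      unfolding q_def[symmetric] by (simp add: distrib_right)
  qed
qed

lemma weighted_drift_le_T_LL:
  assumes lam: "lam < 1" and u: "1 - \<delta> \<le> u" "u \<le> lam"
    and \<delta>: "\<delta> < 1" "real d * \<delta> \<le> real K"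
  shows "lam * (1 - real d * \<delta> / real K) / ((1 - lam) + (real d / real K - 1) * (1 - u))
           * (u - T_LL d K lam u) \<le> T_LL d K lam u"
proof -
  define a where "a = lam * (1 - real d * \<delta> / real K)"
  define q where "q = (1 - lam) + (real d / real K - 1) * (1 - u)"
  have lam_pos: "0 < lam" and u01: "0 \<le> u" "u \<le> 1"
    using u \<delta> lam by auto
  have "1 \<le> real d / real K"
    using K_pos K_less by simp
  then have q_pos: "0 < q"
    unfolding q_def using lam u01 by (simp add: add_pos_nonneg)
  have a_nonneg: "0 \<le> a"
    unfolding a_def using lam_pos \<delta> K_pos by (simp add: field_simps)
  have "lam * u \<le> u"
    using lam u01 lam_pos by (intro mult_left_le_one_le) auto
  with T_LL_le_mult[of lam u] have "0 \<le> u - T_LL d K lam u"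
    using lam_pos u01 by linarith
  moreover have "u - T_LL d K lam u \<le> q"
    unfolding q_def using lam_pos lam u01 by (intro drift_le) auto
  ultimately have "(u - T_LL d K lam u) / q \<le> 1"
    using q_pos by simp
  then have "a / q * (u - T_LL d K lam u) \<le> a"
    using a_nonneg mult_left_mono[of "(u - T_LL d K lam u) / q" 1 a] by simp
  also have "a \<le> lam * (1 - real d * (1 - u) / real K)"
    unfolding a_def using lam_pos u K_pos by (intro mult_left_mono diff_left_mono divide_right_mono) auto
  also have "\<dots> \<le> T_LL d K lam u"
    using lam_pos u01 by (intro T_LL_ge) auto
  finally show ?thesis unfolding a_def q_def .
qed

end

lemma integral_atLeast_le_of_partial_le:
  fixes h :: "real \<Rightarrow> real"
  assumes h_int: "h integrable_on {0..}" and h_nonneg: "\<And>x. 0 \<le> x \<Longrightarrow> 0 \<le> h x"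
    and partial: "\<And>n::nat. integral {0..real n} h \<le> B"
  shows "integral {0..} h \<le> B"
proof -
  define h\<^sub>n where "h\<^sub>n n x = (if x \<in> {0..real n} then h x else 0)" for n :: nat and x :: real
  have "h\<^sub>n n integrable_on {0..}" for n
  proof -
    have "{0..real n} \<inter> {0..} = {0..real n}" by auto
    then show ?thesis
      unfolding h\<^sub>n_def integrable_restrict_Int by (auto intro: integrable_on_subinterval[OF h_int])
  qed
  moreover have "integral {0..} (h\<^sub>n n) = integral {0..real n} h" for n
    unfolding h\<^sub>n_def integral_restrict_Int by (simp add: Int_absorb2)
  moreover have "(\<lambda>n. h\<^sub>n n x) \<longlonglongrightarrow> h x" if "0 \<le> x" for x
  proof (rule tendsto_eventually)
    obtain N :: nat where "x \<le> real N" using real_arch_simple by blast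
    with that show "\<forall>\<^sub>F n in sequentially. h\<^sub>n n x = h x"
      unfolding eventually_sequentially h\<^sub>n_def
      by (intro exI[of _ N]) (auto intro: order_trans[of x "real N"])
  qed
  ultimately have "(\<lambda>n. integral {0..real n} h) \<longlonglongrightarrow> integral {0..} h"
    using dominated_convergence(2)[of h\<^sub>n "{0..}" h h] h_int h_nonneg by (auto simp: h\<^sub>n_def)
  then show ?thesis
    by (rule LIMSEQ_le_const2) (use partial in auto)
qed

lemma has_real_derivative_neg_ln_affine:
  fixes q c u :: real
  assumes "0 < q + c * (1 - u)" "c \<noteq> 0"
  shows "((\<lambda>v. - ln (q + c * (1 - v)) / c) has_real_derivative 1 / (q + c * (1 - u))) (at u)"
proof -
  have affine: "((\<lambda>v. q + c * (1 - v)) has_real_derivative - c) (at u)"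
    by (auto intro!: derivative_eq_intros)
  have "- (inverse (q + c * (1 - u)) * - c) / c = 1 / (q + c * (1 - u))"
    using assms(2) by (simp add: inverse_eq_divide)
  then show ?thesis
    using DERIV_cdivide[OF DERIV_minus[OF DERIV_chain2[OF DERIV_ln[OF assms(1)] affine]], of c]
    by simp
qed

locale LL_ode = LL_params +
  fixes lam :: real and f :: "real \<Rightarrow> real"
  assumes lam_pos: "0 < lam" and lam_less: "lam < 1"
    and f_zero: "f 0 = lam"
    and f_deriv: "\<And>w. 0 \<le> w \<Longrightarrow>
           (f has_real_derivative (T_LL d K lam (f w) - f w)) (at w within {0..})"
begin

abbreviation T :: "real \<Rightarrow> real" where "T u \<equiv> T_LL d K lam u"

lemma f_continuous: "continuous_on {0..} f"
proof (rule DERIV_continuous_on)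
  fix w :: real assume "w \<in> {0..}"
  then show "(f has_real_derivative (T (f w) - f w)) (at w within {0..})"
    by (intro f_deriv) simp
qed

lemma f_has_derivative_at:
  assumes "0 < w"
  shows "(f has_real_derivative (T (f w) - f w)) (at w)"
proof -
  have "(f has_real_derivative (T (f w) - f w)) (at w within {0<..})"
    using assms by (intro has_field_derivative_subset[OF f_deriv]) auto
  moreover have "at w within {0<..} = at w"
    using assms by (intro at_within_open) auto
  ultimately show ?thesis by simp
qed

text \<open>While \<open>f\<close> stays in \<open>(0, 1)\<close>, \<open>0 \<le> T(f) \<le> \<lambda> f\<close>, so \<open>exp w * f w\<close> increases and
  \<open>exp ((1 - \<lambda>) w) * f w\<close> decreases.\<close>
lemma f_exp_bounds_before_exit:
  assumes t: "0 \<le> t" and inside: "\<And>w. 0 < w \<Longrightarrow> w < t \<Longrightarrow> 0 < f w \<and> f w < 1"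
  shows "lam * exp (- t) \<le> f t" and "f t \<le> lam * exp (- ((1 - lam) * t))"
proof -
  have cont: "continuous_on {0..t} f"
    using f_continuous by (rule continuous_on_subset) auto
  have "exp 0 * f 0 \<le> exp t * f t"
  proof (rule DERIV_nonneg_imp_increasing_open[OF t])
    fix w assume w: "0 < w" "w < t"
    have "((\<lambda>w. exp w * f w) has_real_derivative exp w * T (f w)) (at w)"
      using DERIV_mult'[OF DERIV_exp f_has_derivative_at[OF w(1)]] by (simp add: algebra_simps)
    moreover have "0 \<le> exp w * T (f w)"
      using inside[OF w] lam_pos by (simp add: T_LL_nonneg)
    ultimately show "\<exists>y. ((\<lambda>w. exp w * f w) has_real_derivative y) (at w) \<and> 0 \<le> y" by blast
  qed (intro continuous_intros cont)
  then show "lam * exp (- t) \<le> f t"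
    using f_zero by (simp add: exp_minus field_simps)
  have "exp ((1 - lam) * t) * f t \<le> exp ((1 - lam) * 0) * f 0"
  proof (rule DERIV_nonpos_imp_decreasing_open[OF t])
    fix w assume w: "0 < w" "w < t"
    have "((\<lambda>w. exp ((1 - lam) * w) * f w) has_real_derivative
        exp ((1 - lam) * w) * (T (f w) - lam * f w)) (at w)"
      using f_has_derivative_at[OF w(1)]
      by (auto intro!: derivative_eq_intros simp: algebra_simps)
    moreover have "exp ((1 - lam) * w) * (T (f w) - lam * f w) \<le> 0"
      using inside[OF w] lam_pos T_LL_le_mult[of lam "f w"] by (simp add: mult_nonneg_nonpos)
    ultimately show "\<exists>y. ((\<lambda>w. exp ((1 - lam) * w) * f w) has_real_derivative y) (at w) \<and> y \<le> 0"
      by blast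
  qed (intro continuous_intros cont)
  then show "f t \<le> lam * exp (- ((1 - lam) * t))"
    using f_zero by (simp add: exp_minus inverse_eq_divide pos_le_divide_eq mult.commute)
qed

lemma f_in_unit:
  assumes "0 \<le> w"
  shows "0 < f w \<and> f w < 1"
proof (rule ccontr)
  assume exit: "\<not> (0 < f w \<and> f w < 1)"
  define Z where "Z = {0..} \<inter> f -` (- {0<..<1})"
  have "closed Z"
    unfolding Z_def by (rule continuous_closed_preimage[OF f_continuous]) auto
  moreover have "Z \<noteq> {}" "bdd_below Z"
    using assms exit unfolding Z_def by (auto intro: bdd_belowI[of _ 0])
  ultimately have tZ: "Inf Z \<in> Z"
    by (intro closed_contains_Inf)
  then have t: "0 \<le> Inf Z" unfolding Z_def by auto
  have "0 < f v \<and> f v < 1" if "0 < v" "v < Inf Z" for v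
    using that cInf_lower[OF _ \<open>bdd_below Z\<close>, of v] unfolding Z_def by force
  from f_exp_bounds_before_exit[OF t this]
  have "0 < lam * exp (- Inf Z)" "lam * exp (- ((1 - lam) * Inf Z)) \<le> lam"
    and "lam * exp (- Inf Z) \<le> f (Inf Z)" "f (Inf Z) \<le> lam * exp (- ((1 - lam) * Inf Z))"
    using lam_pos lam_less t by (auto simp: mult_left_le)
  then have "0 < f (Inf Z) \<and> f (Inf Z) < 1"
    using lam_less by linarith
  with tZ show False unfolding Z_def by auto
qed

lemma f_le_exp:
  assumes "0 \<le> w"
  shows "f w \<le> lam * exp (- ((1 - lam) * w))"
proof (rule f_exp_bounds_before_exit(2)[OF assms])
  fix v :: real assume "0 < v"
  then show "0 < f v \<and> f v < 1" by (intro f_in_unit) simp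
qed

lemma f_le_lam:
  assumes "0 \<le> w"
  shows "f w \<le> lam"
proof -
  have "exp (- ((1 - lam) * w)) \<le> 1"
    using assms lam_less by simp
  then have "lam * exp (- ((1 - lam) * w)) \<le> lam"
    using lam_pos by (intro mult_left_le) auto
  with f_le_exp[OF assms] show ?thesis by linarith
qed

lemma T_f_le_f:
  assumes "0 \<le> w"
  shows "T (f w) \<le> f w"
proof -
  have f_w: "0 < f w" "f w < 1" using f_in_unit[OF assms] by auto
  then have "T (f w) \<le> lam * f w"
    using lam_pos by (intro T_LL_le_mult) auto
  also have "\<dots> \<le> f w"
    using f_w lam_pos lam_less by (intro mult_left_le_one_le) auto
  finally show ?thesis .
qed

lemma f_antimono:
  assumes "0 \<le> a" "a \<le> b"
  shows "f b \<le> f a"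
proof (rule DERIV_nonpos_imp_decreasing_open[OF assms(2)])
  fix w assume w: "a < w" "w < b"
  have "T (f w) \<le> f w"
    using w assms by (intro T_f_le_f) auto
  then show "\<exists>y. (f has_real_derivative y) (at w) \<and> y \<le> 0"
    using f_has_derivative_at[of w] w assms by auto
next
  show "continuous_on {a..b} f"
    using f_continuous by (rule continuous_on_subset) (use assms in auto)
qed

lemma T_f_nonneg:
  assumes "0 \<le> w"
  shows "0 \<le> T (f w)"
  using f_in_unit[OF assms] lam_pos by (intro T_LL_nonneg) auto

lemma T_f_continuous: "continuous_on {0..} (\<lambda>w. T (f w))"
  unfolding T_LL_def by (intro continuous_intros f_continuous)

lemma T_f_integrable: "(\<lambda>w. T (f w)) integrable_on {0..}"
proof (rule measurable_bounded_by_integrable_imp_integrable_real)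
  show "(\<lambda>w. T (f w)) \<in> borel_measurable (lebesgue_on {0..})"
    by (rule continuous_imp_measurable_on_sets_lebesgue[OF T_f_continuous]) simp
  show "(\<lambda>w. exp (- (1 - lam) * w)) integrable_on {0..}"
    using lam_less integrable_on_exp_minus_to_infinity[of "1 - lam" 0] by simp
  fix w :: real assume w: "w \<in> {0..}"
  have "T (f w) \<le> f w"
    using w by (intro T_f_le_f) auto
  also have "\<dots> \<le> lam * exp (- ((1 - lam) * w))"
    using w by (intro f_le_exp) auto
  also have "\<dots> \<le> exp (- ((1 - lam) * w))"
    using lam_pos lam_less by (intro mult_left_le_one_le) auto
  finally have "T (f w) \<le> exp (- ((1 - lam) * w))" .
  then show "\<bar>T (f w)\<bar> \<le> exp (- (1 - lam) * w)"
    using T_f_nonneg[of w] w by (simp only: mult_minus_left) simp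
qed simp

lemma has_integral_drift_along_f:
  assumes W: "0 \<le> W"
    and P: "\<And>w. w \<in> {0..W} \<Longrightarrow> (P has_real_derivative P' (f w)) (at (f w))"
  shows "((\<lambda>w. P' (f w) * (f w - T (f w))) has_integral P (f 0) - P (f W)) {0..W}"
proof -
  have "((\<lambda>w. P' (f w) * (f w - T (f w))) has_integral (- P (f W)) - (- P (f 0))) {0..W}"
  proof (rule fundamental_theorem_of_calculus[OF W])
    fix w assume w: "w \<in> {0..W}"
    have "(f has_real_derivative (T (f w) - f w)) (at w within {0..W})"
      using w by (intro has_field_derivative_subset[OF f_deriv]) auto
    from DERIV_minus[OF DERIV_chain2[OF P[OF w] this]]
    show "((\<lambda>w. - P (f w)) has_vector_derivative P' (f w) * (f w - T (f w))) (at w within {0..W})"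
      by (simp add: has_real_derivative_iff_has_vector_derivative[symmetric] algebra_simps)
  qed
  then show ?thesis by simp
qed

lemma integral_T_f_le:
  assumes \<delta>: "0 < \<delta>" "\<delta> < 1" "1 - \<delta> \<le> lam"
    and c: "c = real d * (1 - \<delta>) ^ d / real K - 1" "0 < c"
  shows "integral {0..} (\<lambda>w. T (f w))
           \<le> lam / \<delta> ^ (d - 1) + (ln ((1 - lam) + c) - ln ((1 - lam) + c * (1 - lam))) / c"
proof -
  define P where "P u = u / \<delta> ^ (d - 1) + - ln ((1 - lam) + c * (1 - u)) / c" for u
  define P' where "P' u = 1 / \<delta> ^ (d - 1) + 1 / ((1 - lam) + c * (1 - u))" for u
  have arg_pos: "0 < (1 - lam) + c * (1 - f w)" if "0 \<le> w" for w
    using f_in_unit[OF that] lam_less c by (simp add: add_pos_nonneg)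
  have P_deriv: "(P has_real_derivative P' (f w)) (at (f w))" if "0 \<le> w" for w
    unfolding P_def P'_def
    by (intro DERIV_add DERIV_cdivide[OF DERIV_ident] has_real_derivative_neg_ln_affine arg_pos[OF that])
      (use c(2) in auto)
  have P_ge_P0: "P 0 \<le> P (f w)" if "0 \<le> w" for w
  proof -
    have "ln ((1 - lam) + c * (1 - f w)) \<le> ln ((1 - lam) + c * (1 - 0))"
      using arg_pos[OF that] f_in_unit[OF that] c(2) by (intro ln_mono) (auto simp: mult_left_le)
    then have "- ln ((1 - lam) + c * (1 - 0)) / c \<le> - ln ((1 - lam) + c * (1 - f w)) / c"
      using c(2) by (intro divide_right_mono) auto
    moreover have "0 \<le> f w / \<delta> ^ (d - 1)"
      using f_in_unit[OF that] \<delta> by simp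
    ultimately show ?thesis
      unfolding P_def by simp
  qed
  have "integral {0..} (\<lambda>w. T (f w)) \<le> P lam - P 0"
  proof (rule integral_atLeast_le_of_partial_le[OF T_f_integrable T_f_nonneg])
    fix n :: nat
    have drift: "((\<lambda>w. P' (f w) * (f w - T (f w))) has_integral P (f 0) - P (f (real n))) {0..real n}"
      by (rule has_integral_drift_along_f) (auto intro: P_deriv)
    have "integral {0..real n} (\<lambda>w. T (f w)) \<le> P (f 0) - P (f (real n))"
    proof (rule has_integral_le[OF _ drift])
      show "((\<lambda>w. T (f w)) has_integral integral {0..real n} (\<lambda>w. T (f w))) {0..real n}"
        by (intro integrable_integral integrable_on_subinterval[OF T_f_integrable]) auto
      fix w assume "w \<in> {0..real n}"
      then show "T (f w) \<le> P' (f w) * (f w - T (f w))"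
        unfolding P'_def using f_in_unit[of w] lam_pos lam_less \<delta> c
        by (intro T_LL_le_weighted_drift) auto
    qed
    then show "integral {0..real n} (\<lambda>w. T (f w)) \<le> P lam - P 0"
      using P_ge_P0[of "real n"] f_zero by simp
  qed
  then show ?thesis
    unfolding P_def by (simp add: diff_divide_distrib)
qed

lemma integral_T_f_ge:
  assumes \<delta>: "0 < \<delta>" "\<delta> < 1" "1 - \<delta> \<le> lam" "real d * \<delta> \<le> real K"
    and c: "c = real d / real K - 1"
  shows "lam * (1 - real d * \<delta> / real K) / c * (ln ((1 - lam) + c * \<delta>) - ln ((1 - lam) + c * (1 - lam)))
           \<le> integral {0..} (\<lambda>w. T (f w))"
proof -
  have c_pos: "0 < c"
    unfolding c using K_pos K_less by (simp add: field_simps)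
  define a where "a = lam * (1 - real d * \<delta> / real K)"
  define P where "P u = a * (- ln ((1 - lam) + c * (1 - u)) / c)" for u
  define P' where "P' u = a * (1 / ((1 - lam) + c * (1 - u)))" for u
  define W\<^sub>1 where "W\<^sub>1 = - ln (1 - \<delta>) / (1 - lam)"
  have W\<^sub>1: "0 \<le> W\<^sub>1"
    unfolding W\<^sub>1_def using \<delta> lam_less by (intro divide_nonneg_pos) auto
  have "f W\<^sub>1 \<le> lam * exp (- ((1 - lam) * W\<^sub>1))"
    by (rule f_le_exp[OF W\<^sub>1])
  also have "\<dots> = lam * (1 - \<delta>)"
    unfolding W\<^sub>1_def using lam_less \<delta> by simp
  also have "\<dots> \<le> 1 - \<delta>"
    using lam_pos lam_less \<delta> by (intro mult_left_le_one_le) auto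
  finally have "f W\<^sub>1 \<le> 1 - \<delta>" .
  moreover have "continuous_on {0..W\<^sub>1} f"
    using f_continuous by (rule continuous_on_subset) auto
  ultimately obtain W where W: "0 \<le> W" "W \<le> W\<^sub>1" "f W = 1 - \<delta>"
    using IVT2'[of f W\<^sub>1 "1 - \<delta>" 0] \<delta> f_zero W\<^sub>1 by auto
  have P_deriv: "(P has_real_derivative P' (f w)) (at (f w))" if "w \<in> {0..W}" for w
  proof -
    have "0 < (1 - lam) + c * (1 - f w)"
      using f_in_unit[of w] that lam_less c_pos by (simp add: add_pos_nonneg)
    then show ?thesis
      unfolding P_def P'_def using c_pos by (intro DERIV_cmult has_real_derivative_neg_ln_affine) auto
  qed
  have "P (f 0) - P (f W) \<le> integral {0..W} (\<lambda>w. T (f w))"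
  proof (rule has_integral_le[OF has_integral_drift_along_f[OF W(1) P_deriv]])
    show "((\<lambda>w. T (f w)) has_integral integral {0..W} (\<lambda>w. T (f w))) {0..W}"
      by (intro integrable_integral integrable_on_subinterval[OF T_f_integrable]) auto
    fix w assume w: "w \<in> {0..W}"
    have "1 - \<delta> \<le> f w" "f w \<le> lam"
      using f_antimono[of w W] f_le_lam[of w] w W by auto
    then have "a / ((1 - lam) + c * (1 - f w)) * (f w - T (f w)) \<le> T (f w)"
      unfolding a_def c using lam_less \<delta> by (intro weighted_drift_le_T_LL) auto
    then show "P' (f w) * (f w - T (f w)) \<le> T (f w)"
      unfolding P'_def by simp
  qed
  also have "\<dots> \<le> integral {0..} (\<lambda>w. T (f w))"
    using T_f_nonneg
    by (intro integral_subset_le integrable_on_subinterval[OF T_f_integrable] T_f_integrable) auto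
  finally show ?thesis
    unfolding P_def a_def f_zero W(3) by (simp add: algebra_simps diff_divide_distrib)
qed

lemma mean_wait_ratio_le:
  assumes \<delta>: "0 < \<delta>" "\<delta> < 1" "1 - \<delta> \<le> lam"
    and c: "c = real d * (1 - \<delta>) ^ d / real K - 1" "0 < c"
  shows "- mean_wait d K lam f / ln (1 - lam)
           \<le> 1 / (lam * c) + (1 / \<delta> ^ (d - 1) + (ln (1 - lam + c) - ln (1 + c)) / (c * lam))
                                / - ln (1 - lam)"
proof -
  define L where "L = - ln (1 - lam)"
  have L_pos: "0 < L"
    unfolding L_def using lam_pos lam_less by simp
  have "(1 - lam) + c * (1 - lam) = (1 - lam) * (1 + c)"
    by (simp add: algebra_simps)
  then have ln_split: "ln ((1 - lam) + c * (1 - lam)) = - L + ln (1 + c)"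
    unfolding L_def using lam_less c(2) by (simp add: ln_mult)
  have "integral {0..} (\<lambda>w. T (f w)) \<le> lam / \<delta> ^ (d - 1) + (ln (1 - lam + c) - (- L + ln (1 + c))) / c"
    using integral_T_f_le[OF \<delta> c] unfolding ln_split .
  then have "integral {0..} (\<lambda>w. T (f w)) / (lam * L)
      \<le> (lam / \<delta> ^ (d - 1) + (ln (1 - lam + c) - (- L + ln (1 + c))) / c) / (lam * L)"
    using lam_pos L_pos by (intro divide_right_mono) auto
  also have "\<dots> = 1 / (lam * c) + (1 / \<delta> ^ (d - 1) + (ln (1 - lam + c) - ln (1 + c)) / (c * lam)) / L"
    using lam_pos L_pos c(2) \<delta> by (simp add: field_simps)
  finally show ?thesis
    unfolding mean_wait_def L_def by (simp add: mult.commute)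
qed

lemma mean_wait_ratio_ge:
  assumes \<delta>: "0 < \<delta>" "\<delta> < 1" "1 - \<delta> \<le> lam" "real d * \<delta> \<le> real K"
    and c: "c = real d / real K - 1"
  shows "(1 - real d * \<delta> / real K) / c * (1 + (ln (1 - lam + c * \<delta>) - ln (1 + c)) / - ln (1 - lam))
           \<le> - mean_wait d K lam f / ln (1 - lam)"
proof -
  define L where "L = - ln (1 - lam)"
  have L_pos: "0 < L"
    unfolding L_def using lam_pos lam_less by simp
  have c_pos: "0 < c"
    unfolding c using K_pos K_less by (simp add: field_simps)
  have "(1 - lam) + c * (1 - lam) = (1 - lam) * (1 + c)"
    by (simp add: algebra_simps)
  then have ln_split: "ln ((1 - lam) + c * (1 - lam)) = - L + ln (1 + c)"
    unfolding L_def using lam_less c_pos by (simp add: ln_mult)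
  have "lam * (1 - real d * \<delta> / real K) / c * (ln (1 - lam + c * \<delta>) - (- L + ln (1 + c)))
      \<le> integral {0..} (\<lambda>w. T (f w))"
    using integral_T_f_ge[OF \<delta> c] unfolding ln_split .
  then have "lam * (1 - real d * \<delta> / real K) / c * (ln (1 - lam + c * \<delta>) - (- L + ln (1 + c))) / (lam * L)
      \<le> integral {0..} (\<lambda>w. T (f w)) / (lam * L)"
    using lam_pos L_pos by (intro divide_right_mono) auto
  moreover have "lam * (1 - real d * \<delta> / real K) / c * (ln (1 - lam + c * \<delta>) - (- L + ln (1 + c))) / (lam * L)
      = (1 - real d * \<delta> / real K) / c * (1 + (ln (1 - lam + c * \<delta>) - ln (1 + c)) / L)"
    using lam_pos L_pos c_pos K_pos by (simp add: field_simps)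
  ultimately show ?thesis
    unfolding mean_wait_def L_def by (simp add: mult.commute)
qed

end

lemma tendsto_divide_neg_ln_one_minus:
  assumes "(g \<longlongrightarrow> l) (at_left (1::real))"
  shows "((\<lambda>x. g x / - ln (1 - x)) \<longlongrightarrow> 0) (at_left 1)"
proof (rule tendsto_divide_0[OF assms])
  show "filterlim (\<lambda>x. - ln (1 - x)) at_infinity (at_left (1::real))"
    by (rule filterlim_at_top_imp_at_infinity) real_asymp
qed

lemma eventually_at_left_one:
  assumes "0 < \<delta>"
  shows "\<forall>\<^sub>F lam in at_left (1::real). 1 - \<delta> \<le> lam \<and> 0 < lam \<and> lam < 1"
  unfolding eventually_at_left_field using assms by (intro exI[of _ "max (1 - \<delta>) 0"]) auto

context LL_params
begin

lemma mean_wait_ratio_eventually_greater: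
  assumes ode: "\<And>lam. lam \<in> {0<..<1} \<Longrightarrow> LL_ode d K lam (F lam)"
    and a: "a < real K / real (d - K)"
  shows "\<forall>\<^sub>F lam in at_left 1. a < - mean_wait d K lam (F lam) / ln (1 - lam)"
proof -
  define c where "c = real d / real K - 1"
  have c_pos: "0 < c"
    unfolding c_def using K_pos K_less by (simp add: field_simps)
  have "real K / real (d - K) = 1 / c"
    unfolding c_def using K_pos K_less by (simp add: of_nat_diff field_simps)
  with a have a_less: "a < (1 - real d * 0 / real K) / c" by simp
  have "\<forall>\<^sub>F \<delta> in at_right 0. 0 < \<delta> \<and> \<delta> < 1 \<and> real d * \<delta> < real K
          \<and> a < (1 - real d * \<delta> / real K) / c"
  proof (intro eventually_conj eventually_at_right_less)
    show "\<forall>\<^sub>F \<delta> in at_right 0. \<delta> < (1::real)"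
      by (rule order_tendstoD(2)[OF tendsto_ident_at]) simp
    show "\<forall>\<^sub>F \<delta> in at_right 0. real d * \<delta> < real K"
      using K_pos by (intro order_tendstoD(2)[of _ "real d * 0"] tendsto_intros) auto
    show "\<forall>\<^sub>F \<delta> in at_right 0. a < (1 - real d * \<delta> / real K) / c"
      using a_less K_pos c_pos
      by (intro order_tendstoD(1)[of _ "(1 - real d * 0 / real K) / c"] tendsto_intros) auto
  qed
  then obtain \<delta> where \<delta>: "0 < \<delta>" "\<delta> < 1" "real d * \<delta> < real K" "a < (1 - real d * \<delta> / real K) / c"
    using eventually_happens'[OF trivial_limit_at_right_real] by blast
  define B where
    "B lam = (1 - real d * \<delta> / real K) / c * (1 + (ln (1 - lam + c * \<delta>) - ln (1 + c)) / - ln (1 - lam))"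
    for lam
  have "(B \<longlongrightarrow> (1 - real d * \<delta> / real K) / c * (1 + 0)) (at_left 1)"
    unfolding B_def using c_pos \<delta>
    by (intro tendsto_intros tendsto_divide_neg_ln_one_minus[of _ "ln (1 - 1 + c * \<delta>) - ln (1 + c)"]) auto
  then have "\<forall>\<^sub>F lam in at_left 1. a < B lam"
    using \<delta>(4) by (intro order_tendstoD(1)) auto
  with eventually_at_left_one[OF \<delta>(1)] show ?thesis
  proof eventually_elim
    case (elim lam)
    have "B lam \<le> - mean_wait d K lam (F lam) / ln (1 - lam)"
      unfolding B_def using elim \<delta> c_def
      by (intro LL_ode.mean_wait_ratio_ge[OF ode]) auto
    with elim show ?case by linarith
  qed
qed

lemma mean_wait_ratio_eventually_less:
  assumes ode: "\<And>lam. lam \<in> {0<..<1} \<Longrightarrow> LL_ode d K lam (F lam)"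
    and a: "real K / real (d - K) < a"
  shows "\<forall>\<^sub>F lam in at_left 1. - mean_wait d K lam (F lam) / ln (1 - lam) < a"
proof -
  define c where "c \<delta> = real d * (1 - \<delta>) ^ d / real K - 1" for \<delta>
  have c0: "c 0 = real d / real K - 1"
    unfolding c_def by simp
  have c0_pos: "0 < c 0"
    unfolding c0 using K_pos K_less by (simp add: field_simps)
  have "real K / real (d - K) = 1 / c 0"
    unfolding c0 using K_pos K_less by (simp add: of_nat_diff field_simps)
  with a have a_greater: "1 / c 0 < a" by simp
  have c_cont: "(c \<longlongrightarrow> c 0) (at_right 0)"
    unfolding c_def using K_pos by (intro tendsto_intros) auto
  have "\<forall>\<^sub>F \<delta> in at_right 0. 0 < \<delta> \<and> \<delta> < 1 \<and> 0 < c \<delta> \<and> 1 / c \<delta> < a"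
  proof (intro eventually_conj eventually_at_right_less)
    show "\<forall>\<^sub>F \<delta> in at_right 0. \<delta> < (1::real)"
      by (rule order_tendstoD(2)[OF tendsto_ident_at]) simp
    show "\<forall>\<^sub>F \<delta> in at_right 0. 0 < c \<delta>"
      using c0_pos by (intro order_tendstoD(1)[OF c_cont])
    show "\<forall>\<^sub>F \<delta> in at_right 0. 1 / c \<delta> < a"
      using a_greater c0_pos by (intro order_tendstoD(2)[of _ "1 / c 0"] tendsto_intros c_cont) auto
  qed
  then obtain \<delta> where \<delta>: "0 < \<delta>" "\<delta> < 1" "0 < c \<delta>" "1 / c \<delta> < a"
    using eventually_happens'[OF trivial_limit_at_right_real] by blast
  define B where
    "B lam = 1 / (lam * c \<delta>) + (1 / \<delta> ^ (d - 1) + (ln (1 - lam + c \<delta>) - ln (1 + c \<delta>)) / (c \<delta> * lam))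
               / - ln (1 - lam)"
    for lam
  have "(B \<longlongrightarrow> 1 / (1 * c \<delta>) + 0) (at_left 1)"
    unfolding B_def using \<delta>
    by (intro tendsto_intros tendsto_divide_neg_ln_one_minus[of _
          "1 / \<delta> ^ (d - 1) + (ln (1 - 1 + c \<delta>) - ln (1 + c \<delta>)) / (c \<delta> * 1)"]) auto
  then have "\<forall>\<^sub>F lam in at_left 1. B lam < a"
    using \<delta>(4) by (intro order_tendstoD(2)) auto
  with eventually_at_left_one[OF \<delta>(1)] show ?thesis
  proof eventually_elim
    case (elim lam)
    have "- mean_wait d K lam (F lam) / ln (1 - lam) \<le> B lam"
      unfolding B_def using elim \<delta> c_def
      by (intro LL_ode.mean_wait_ratio_le[OF ode]) auto
    with elim show ?case by linarith
  qed
qed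

end

theorem mainTheorem5:
  fixes d K :: nat and F :: "real \<Rightarrow> real \<Rightarrow> real"
  assumes "1 \<le> K" and "K < d"
    and "\<And>lam. lam \<in> {0<..<1} \<Longrightarrow> F lam 0 = lam"
    and "\<And>lam w. lam \<in> {0<..<1} \<Longrightarrow> w \<ge> 0 \<Longrightarrow>
           (F lam has_real_derivative (T_LL d K lam (F lam w) - F lam w)) (at w within {0..})"
  shows "((\<lambda>lam. - mean_wait d K lam (F lam) / ln (1 - lam))
            \<longlongrightarrow> real K / real (d - K)) (at_left 1)"
proof -
  interpret LL_params d K
    using assms(1,2) by unfold_locales
  have ode: "LL_ode d K lam (F lam)" if "lam \<in> {0<..<1}" for lam
    using assms that by unfold_locales auto
  show ?thesis
  proof (rule order_tendstoI)
    fix a :: real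
    show "a < real K / real (d - K) \<Longrightarrow>
        \<forall>\<^sub>F lam in at_left 1. a < - mean_wait d K lam (F lam) / ln (1 - lam)"
      by (rule mean_wait_ratio_eventually_greater[OF ode])
    show "real K / real (d - K) < a \<Longrightarrow>
        \<forall>\<^sub>F lam in at_left 1. - mean_wait d K lam (F lam) / ln (1 - lam) < a"
      by (rule mean_wait_ratio_eventually_less[OF ode])
  qed
qed

end
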